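(* Let $G$ and $H$ be cyclically orderable graphs, each with at least two vertices, with $d(G)=d(H)$. Then for any $u\in V(G)$ and $v\in V(H)$, the series composition $G\oplus H$ obtained by gluing $u$ and $v$ is cyclically orderable.
   Context: The density of a connected graph $G$ with at least two vertices is $d(G)=\frac{|E(G)|}{|V(G)|-1}$. A cyclic base ordering (CBO) of a connected graph $G$ is a bijection $\mathcal{O}:E(G)\to\{1,\dots,|E(G)|\}$ such that for every $i\in\{1,\dots,|E(G)|\}$ the edges $\mathcal{O}^{-1}(i),\dots,\mathcal{O}^{-1}(i+|V(G)|-2)$ (indices taken cyclically modulo $|E(G)|$) induce a spanning tree of $G$; $G$ is cyclically orderable if it has a CBO. Given graphs $G$ and $H$ (vertex-disjoint) with $u\in V(G)$ and $v\in V(H)$, the series composition $G\oplus H$ is the graph obtained from the disjoint union of $G$ and $H$ by identifying $u$ and $v$ into a single vertex. *)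

theory Defs
  imports Complex_Main
begin

text \<open>Finite loopless multigraphs: a vertex set, an edge set, and for every edge
  the set of its two (distinct) end vertices. Simple graphs are the special case
  where no two edges have the same ends.\<close>

record ('v, 'e) mgraph =
  verts :: "'v set"
  edges :: "'e set"
  ends  :: "'e \<Rightarrow> 'v set"

definition wf_graph :: "('v, 'e) mgraph \<Rightarrow> bool" where
  "wf_graph G \<longleftrightarrow> finite (verts G) \<and> finite (edges G) \<and>
     (\<forall>e\<in>edges G. \<exists>x y. x \<in> verts G \<and> y \<in> verts G \<and> x \<noteq> y \<and> ends G e = {x, y})"

definition adj_in :: "('v, 'e) mgraph \<Rightarrow> 'e set \<Rightarrow> 'v \<Rightarrow> 'v \<Rightarrow> bool" where
  "adj_in G T x y \<longleftrightarrow> (\<exists>e\<in>T. ends G e = {x, y})"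

definition connected_sub :: "('v, 'e) mgraph \<Rightarrow> 'e set \<Rightarrow> bool" where
  "connected_sub G T \<longleftrightarrow>
     (\<forall>x\<in>verts G. \<forall>y\<in>verts G. (x, y) \<in> {(a, b). adj_in G T a b}\<^sup>*)"

definition connected_graph :: "('v, 'e) mgraph \<Rightarrow> bool" where
  "connected_graph G \<longleftrightarrow> wf_graph G \<and> verts G \<noteq> {} \<and> connected_sub G (edges G)"

text \<open>T \<subseteq> E induces a spanning tree: (V,T) is connected and acyclic, where acyclic
  means no edge of T lies on a cycle, i.e. removing any edge of T disconnects.\<close>
definition spanning_tree :: "('v, 'e) mgraph \<Rightarrow> 'e set \<Rightarrow> bool" where
  "spanning_tree G T \<longleftrightarrow> T \<subseteq> edges G \<and> connected_sub G T \<and>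
     (\<forall>e\<in>T. \<not> connected_sub G (T - {e}))"

definition density :: "('v, 'e) mgraph \<Rightarrow> real" where
  "density G = real (card (edges G)) / (real (card (verts G)) - 1)"

text \<open>Cyclic window of length |V|-1 starting at position i (positions 1..m, cyclic mod m).\<close>
definition cbo_window :: "('v, 'e) mgraph \<Rightarrow> ('e \<Rightarrow> nat) \<Rightarrow> nat \<Rightarrow> 'e set" where
  "cbo_window G ord i = {e \<in> edges G.
      (\<exists>k < card (verts G) - 1. ord e = (i - 1 + k) mod card (edges G) + 1)}"

definition is_CBO :: "('v, 'e) mgraph \<Rightarrow> ('e \<Rightarrow> nat) \<Rightarrow> bool" where
  "is_CBO G ord \<longleftrightarrow> bij_betw ord (edges G) {1..card (edges G)} \<and>
     (\<forall>i\<in>{1..card (edges G)}. spanning_tree G (cbo_window G ord i))"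

definition cyclically_orderable :: "('v, 'e) mgraph \<Rightarrow> bool" where
  "cyclically_orderable G \<longleftrightarrow> connected_graph G \<and> (\<exists>ord. is_CBO G ord)"

text \<open>Series composition: disjoint union of G and H with u \<in> V(G) and v \<in> V(H)
  identified (the identified vertex is represented by Inl u).\<close>
definition glue_map :: "'a \<Rightarrow> 'b \<Rightarrow> 'b \<Rightarrow> 'a + 'b" where
  "glue_map u v x = (if x = v then Inl u else Inr x)"

definition series_comp :: "('a, 'e) mgraph \<Rightarrow> ('b, 'f) mgraph \<Rightarrow> 'a \<Rightarrow> 'b
      \<Rightarrow> ('a + 'b, 'e + 'f) mgraph" where
  "series_comp G H u v =
     \<lparr> verts = Inl ` verts G \<union> glue_map u v ` verts H,
       edges = Inl ` edges G \<union> Inr ` edges H,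
       ends = (\<lambda>x. case x of Inl e \<Rightarrow> Inl ` ends G e
                           | Inr f \<Rightarrow> glue_map u v ` ends H f) \<rparr>"

end

theory Submission
  imports Defs
begin

text \<open>Since \<open>d(G) = d(H)\<close>, one can write \<open>|E(G)| = a s\<close>, \<open>|V(G)| - 1 = b s\<close>,
  \<open>|E(H)| = a t\<close> and \<open>|V(H)| - 1 = b t\<close>. Cut a CBO of \<open>G\<close> into \<open>a\<close> blocks of \<open>s\<close>
  consecutive edges, a CBO of \<open>H\<close> into \<open>a\<close> blocks of \<open>t\<close> edges, and interleave them: the
  \<open>j\<close>-th block of \<open>G\<close> followed by the \<open>j\<close>-th block of \<open>H\<close>. Every cyclic window of
  \<open>b (s + t)\<close> consecutive positions of the merged order contains exactly \<open>b s\<close> cyclically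
  consecutive edges of \<open>G\<close> and \<open>b t\<close> of \<open>H\<close>, that is, a window of each CBO. Their union is
  a spanning tree of \<open>G \<oplus> H\<close>, because the two graphs share only the glued vertex.\<close>

text \<open>A sequence is cut into blocks of length \<open>T\<close>, and a stream occupies the offsets
  \<open>s..<s + t\<close> of every block. \<open>slot_pos T s t p\<close> is the (0-based) position of the \<open>p\<close>-th
  item of the stream; \<open>slots_before T s t x\<close> counts its items at positions below \<open>x\<close>.\<close>

definition slot_pos :: "nat \<Rightarrow> nat \<Rightarrow> nat \<Rightarrow> nat \<Rightarrow> nat" where
  "slot_pos T s t p = (p div t) * T + s + p mod t"

definition slots_before :: "nat \<Rightarrow> nat \<Rightarrow> nat \<Rightarrow> nat \<Rightarrow> nat" where
  "slots_before T s t x = (x div T) * t + min t (x mod T - s)"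

lemma slot_pos_div_mod:
  assumes "0 < t" "s + t \<le> T"
  shows "slot_pos T s t p div T = p div t" "slot_pos T s t p mod T = s + p mod t"
proof -
  have "s + p mod t < T" using assms mod_less_divisor[OF assms(1), of p] by linarith
  then show "slot_pos T s t p div T = p div t" "slot_pos T s t p mod T = s + p mod t"
    unfolding slot_pos_def by (simp_all add: add.assoc)
qed

lemma slots_before_slot_pos:
  assumes "0 < t" "s + t \<le> T"
  shows "slots_before T s t (slot_pos T s t p) = p"
  using assms by (simp add: slots_before_def slot_pos_div_mod)

lemma le_slot_pos_iff:
  assumes "0 < t" "s + t \<le> T"
  shows "x \<le> slot_pos T s t p \<longleftrightarrow> slots_before T s t x \<le> p"
proof -
  have T: "0 < T" using assms by simp
  obtain q r where x: "x = q * T + r" "r < T"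
    using T by (metis div_mult_mod_eq mod_less_divisor)
  obtain c d where p: "p = c * t + d" "d < t"
    using assms(1) by (metis div_mult_mod_eq mod_less_divisor)
  have sp: "slot_pos T s t p = c * T + (s + d)" and sb: "slots_before T s t x = q * t + min t (r - s)"
    using x p assms T by (simp_all add: slot_pos_def slots_before_def)
  consider "q < c" | "q = c" | "c < q" by linarith
  then show ?thesis
  proof cases
    case 1
    then have "q * T + T \<le> c * T" "q * t + t \<le> c * t"
      by (metis Suc_leI mult_Suc mult_le_mono1 add.commute)+
    moreover have "min t (r - s) \<le> t" by simp
    ultimately show ?thesis unfolding sp sb using x p by linarith
  next
    case 2
    then show ?thesis unfolding sp sb using x p by (auto simp: min_def)
  next
    case 3
    then have "c * T + T \<le> q * T" "c * t + t \<le> q * t"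
      by (metis Suc_leI mult_Suc mult_le_mono1 add.commute)+
    then show ?thesis unfolding sp sb using x p assms(2) by linarith
  qed
qed

lemma slots_before_add_blocks:
  assumes "0 < T"
  shows "slots_before T s t (x + c * T) = slots_before T s t x + c * t"
  using assms by (simp add: slots_before_def algebra_simps)

lemma slot_pos_add_blocks:
  assumes "0 < t"
  shows "slot_pos T s t (p + c * t) = slot_pos T s t p + c * T"
  using assms by (simp add: slot_pos_def algebra_simps)

lemma slot_pos_less:
  assumes "0 < t" "s + t \<le> T" "p < a * t"
  shows "slot_pos T s t p < a * T"
proof -
  have "p div t < a" using assms by (simp add: div_less_iff_less_mult)
  then have "(p div t + 1) * T \<le> a * T" using mult_le_mono1[of "p div t + 1" a T] by simp
  moreover have "s + p mod t < T" using assms mod_less_divisor[OF assms(1), of p] by linarith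
  ultimately show ?thesis unfolding slot_pos_def by (simp add: algebra_simps)
qed

lemma slot_pos_in_window_iff:
  assumes "0 < t" "s + t \<le> T" "p < a * t"
  shows "(\<exists>k < b * T. slot_pos T s t p = (w + k) mod (a * T)) \<longleftrightarrow>
         (\<exists>k < b * t. p = (slots_before T s t w + k) mod (a * t))"
proof
  assume "\<exists>k < b * T. slot_pos T s t p = (w + k) mod (a * T)"
  then obtain k where k: "k < b * T" "slot_pos T s t p = (w + k) mod (a * T)" by blast
  define p' where "p' = p + ((w + k) div (a * T) * a) * t"
  have "w + k = slot_pos T s t p + (w + k) div (a * T) * (a * T)"
    using k(2) by (metis div_mult_mod_eq add.commute)
  also have "\<dots> = slot_pos T s t p'"
    unfolding p'_def slot_pos_add_blocks[OF assms(1)] by (simp add: mult.assoc)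
  finally have wk: "w + k = slot_pos T s t p'" .
  then have lo: "slots_before T s t w \<le> p'"
    using le_slot_pos_iff[OF assms(1,2)] le_add1 by metis
  have "\<not> w + b * T \<le> slot_pos T s t p'" using wk k(1) by linarith
  then have hi: "p' < slots_before T s t w + b * t"
    using le_slot_pos_iff[OF assms(1,2)] slots_before_add_blocks[of T] assms by auto
  show "\<exists>k < b * t. p = (slots_before T s t w + k) mod (a * t)"
  proof (intro exI conjI)
    show "p' - slots_before T s t w < b * t" using lo hi by linarith
    show "p = (slots_before T s t w + (p' - slots_before T s t w)) mod (a * t)"
      using lo assms(3) unfolding p'_def by (simp add: mult.assoc)
  qed
next
  assume "\<exists>k < b * t. p = (slots_before T s t w + k) mod (a * t)"
  then obtain k where k: "k < b * t" "p = (slots_before T s t w + k) mod (a * t)" by blast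
  define x where "x = slots_before T s t w + k"
  define N where "N = x div (a * t)"
  have x: "x = p + (N * a) * t"
    using k(2) unfolding x_def N_def by (metis div_mult_mod_eq add.commute mult.assoc)
  have lo: "w \<le> slot_pos T s t x"
    using le_slot_pos_iff[OF assms(1,2)] unfolding x_def by simp
  have "\<not> slots_before T s t (w + b * T) \<le> x"
    using slots_before_add_blocks[of T] assms k(1) unfolding x_def by simp
  then have hi: "slot_pos T s t x < w + b * T"
    using le_slot_pos_iff[OF assms(1,2)] by (meson not_le)
  have sx: "slot_pos T s t x = slot_pos T s t p + N * (a * T)"
    unfolding x slot_pos_add_blocks[OF assms(1)] by (simp add: mult.assoc)
  show "\<exists>k < b * T. slot_pos T s t p = (w + k) mod (a * T)"
  proof (intro exI conjI)
    show "slot_pos T s t x - w < b * T" using lo hi by linarith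
    show "slot_pos T s t p = (w + (slot_pos T s t x - w)) mod (a * T)"
      using lo sx slot_pos_less[OF assms] by (simp add: mult.assoc)
  qed
qed

definition in_cyclic_window :: "nat \<Rightarrow> nat \<Rightarrow> nat \<Rightarrow> nat \<Rightarrow> bool" where
  "in_cyclic_window m n i q \<longleftrightarrow> (\<exists>k < n. q = (i - 1 + k) mod m + 1)"

lemma cbo_window_in_cyclic_window:
  "cbo_window G ord i =
     {e \<in> edges G. in_cyclic_window (card (edges G)) (card (verts G) - 1) i (ord e)}"
  by (simp add: cbo_window_def in_cyclic_window_def)

lemma in_cyclic_window_slot_pos_iff:
  assumes "0 < t" "s + t \<le> T" "q \<in> {1..a * t}"
  shows "in_cyclic_window (a * T) (b * T) i (slot_pos T s t (q - 1) + 1) \<longleftrightarrow>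
         in_cyclic_window (a * t) (b * t) (slots_before T s t (i - 1) mod (a * t) + 1) q"
proof -
  have "q - 1 < a * t" using assms(3) by auto
  then have "in_cyclic_window (a * T) (b * T) i (slot_pos T s t (q - 1) + 1) \<longleftrightarrow>
      (\<exists>k < b * t. q - 1 = (slots_before T s t (i - 1) + k) mod (a * t))"
    unfolding in_cyclic_window_def using slot_pos_in_window_iff[OF assms(1,2)] by simp
  also have "\<dots> \<longleftrightarrow> in_cyclic_window (a * t) (b * t) (slots_before T s t (i - 1) mod (a * t) + 1) q"
    unfolding in_cyclic_window_def using assms(3) by (auto simp: mod_add_left_eq)
  finally show ?thesis .
qed

text \<open>Orders are 1-based as in \<^const>\<open>is_CBO\<close>: the left stream takes the offsets \<open>0..<s\<close>
  of each block of length \<open>s + t\<close>, the right one the offsets \<open>s..<s + t\<close>.\<close>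

definition interleave :: "nat \<Rightarrow> nat \<Rightarrow> ('e \<Rightarrow> nat) \<Rightarrow> ('f \<Rightarrow> nat) \<Rightarrow> 'e + 'f \<Rightarrow> nat" where
  "interleave s t f g = case_sum (\<lambda>e. slot_pos (s + t) 0 s (f e - 1) + 1)
                                 (\<lambda>e. slot_pos (s + t) s t (g e - 1) + 1)"

lemma inj_slot_pos:
  assumes "0 < t" "s + t \<le> T"
  shows "inj (slot_pos T s t)"
  by (metis injI slots_before_slot_pos[OF assms])

lemma inj_on_interleave:
  assumes "inj_on f A" "f ` A \<subseteq> {1..}" "inj_on g B" "g ` B \<subseteq> {1..}" "0 < s" "0 < t"
  shows "inj_on (interleave s t f g) (Inl ` A \<union> Inr ` B)"
proof -
  have le: "0 + s \<le> s + t" "s + t \<le> s + t" by simp_all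
  have pred_inj: "inj_on (\<lambda>x. h x - 1) C"
    if "inj_on h C" "h ` C \<subseteq> {1..}" for h :: "'c \<Rightarrow> nat" and C
  proof (rule inj_onI)
    fix x y assume xy: "x \<in> C" "y \<in> C" "h x - 1 = h y - 1"
    moreover have "1 \<le> h x" "1 \<le> h y" using xy(1,2) that(2) by auto
    ultimately show "x = y" using inj_onD[OF that(1)] by simp
  qed
  have "slot_pos (s + t) 0 s p mod (s + t) < s" "s \<le> slot_pos (s + t) s t q mod (s + t)" for p q
    using slot_pos_div_mod(2)[OF assms(5) le(1)] slot_pos_div_mod(2)[OF assms(6) le(2)] assms(5)
    by simp_all
  then have disjoint: "slot_pos (s + t) 0 s p \<noteq> slot_pos (s + t) s t q" for p q
    by (metis not_le)
  have inj_A: "inj_on (\<lambda>e. slot_pos (s + t) 0 s (f e - 1)) A"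
    using pred_inj[OF assms(1,2)] inj_slot_pos[OF assms(5) le(1)] by (simp add: inj_on_def inj_def)
  have inj_B: "inj_on (\<lambda>e. slot_pos (s + t) s t (g e - 1)) B"
    using pred_inj[OF assms(3,4)] inj_slot_pos[OF assms(6) le(2)] by (simp add: inj_on_def inj_def)
  show ?thesis
  proof (rule inj_onI)
    fix x y assume "x \<in> Inl ` A \<union> Inr ` B" "y \<in> Inl ` A \<union> Inr ` B"
      and "interleave s t f g x = interleave s t f g y"
    then show "x = y"
      using disjoint disjoint[THEN not_sym] inj_onD[OF inj_A] inj_onD[OF inj_B]
      unfolding interleave_def by auto
  qed
qed

lemma bij_betw_interleave:
  assumes f: "bij_betw f A {1..a * s}" and g: "bij_betw g B {1..a * t}" and "0 < s" "0 < t"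
  shows "bij_betw (interleave s t f g) (Inl ` A \<union> Inr ` B) {1..a * (s + t)}"
proof -
  let ?h = "interleave s t f g"
  have inj: "inj_on ?h (Inl ` A \<union> Inr ` B)"
    using f g assms(3,4) by (intro inj_on_interleave) (auto simp: bij_betw_def)
  have "?h x \<in> {1..a * (s + t)}" if "x \<in> Inl ` A \<union> Inr ` B" for x
  proof -
    have "f e - 1 < a * s" if "e \<in> A" for e
      using bij_betw_apply[OF f that] by auto
    moreover have "g e - 1 < a * t" if "e \<in> B" for e
      using bij_betw_apply[OF g that] by auto
    ultimately show ?thesis
      using that slot_pos_less[OF assms(3), of 0 "s + t"] slot_pos_less[OF assms(4), of s "s + t"]
      unfolding interleave_def by (auto simp: Suc_le_eq)
  qed
  moreover have "card (Inl ` A \<union> Inr ` B) = card {1..a * (s + t)}"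
  proof -
    have "finite A" "finite B" using f g bij_betw_finite by blast+
    then have "card (Inl ` A \<union> Inr ` B) = card A + card B"
      by (subst card_Un_disjoint) (auto simp: card_image)
    then show ?thesis using bij_betw_same_card[OF f] bij_betw_same_card[OF g]
      by (simp add: algebra_simps)
  qed
  ultimately have "?h ` (Inl ` A \<union> Inr ` B) = {1..a * (s + t)}"
    using inj by (intro card_subset_eq) (auto simp: card_image)
  then show ?thesis using inj by (simp add: bij_betw_def)
qed

lemma interleave_window:
  assumes "f ` A \<subseteq> {1..a * s}" "g ` B \<subseteq> {1..a * t}" "0 < s" "0 < t"
  shows "{x \<in> Inl ` A \<union> Inr ` B.
            in_cyclic_window (a * (s + t)) (b * (s + t)) i (interleave s t f g x)} =
         Inl ` {e \<in> A. in_cyclic_window (a * s) (b * s)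
                          (slots_before (s + t) 0 s (i - 1) mod (a * s) + 1) (f e)} \<union>
         Inr ` {e \<in> B. in_cyclic_window (a * t) (b * t)
                          (slots_before (s + t) s t (i - 1) mod (a * t) + 1) (g e)}"
proof -
  have "in_cyclic_window (a * (s + t)) (b * (s + t)) i (interleave s t f g (Inl e)) \<longleftrightarrow>
        in_cyclic_window (a * s) (b * s) (slots_before (s + t) 0 s (i - 1) mod (a * s) + 1) (f e)"
    if "e \<in> A" for e
    using in_cyclic_window_slot_pos_iff[OF assms(3), of 0 "s + t" "f e"] assms(1) that
    unfolding interleave_def by auto
  moreover have "in_cyclic_window (a * (s + t)) (b * (s + t)) i (interleave s t f g (Inr e)) \<longleftrightarrow>
        in_cyclic_window (a * t) (b * t) (slots_before (s + t) s t (i - 1) mod (a * t) + 1) (g e)"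
    if "e \<in> B" for e
    using in_cyclic_window_slot_pos_iff[OF assms(4), of s "s + t" "g e"] assms(2) that
    unfolding interleave_def by auto
  ultimately show ?thesis by blast
qed

abbreviation adj_rel :: "('v, 'e) mgraph \<Rightarrow> 'e set \<Rightarrow> ('v \<times> 'v) set" where
  "adj_rel G T \<equiv> {(x, y). adj_in G T x y}"

lemma rtrancl_map_reflcl:
  assumes "(x, y) \<in> r\<^sup>*" and "\<And>a b. (a, b) \<in> r \<Longrightarrow> (f a, f b) \<in> s\<^sup>="
  shows "(f x, f y) \<in> s\<^sup>*"
  using assms(1)
proof (induction rule: rtrancl_induct)
  case (step y z)
  then have "(f y, f z) \<in> s \<or> f y = f z" using assms(2) by auto
  with step.IH show ?case by (auto intro: rtrancl_into_rtrancl)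
qed simp

lemma rtrancl_adj_rel_map:
  assumes "(x, y) \<in> (adj_rel G' T')\<^sup>*"
    and "\<And>E. E \<in> T' \<Longrightarrow>
      (\<exists>e\<in>T. f ` ends G' E = ends G e) \<or> (\<forall>a\<in>ends G' E. \<forall>b\<in>ends G' E. f a = f b)"
  shows "(f x, f y) \<in> (adj_rel G T)\<^sup>*"
proof (rule rtrancl_map_reflcl[OF assms(1)])
  fix a b assume "(a, b) \<in> adj_rel G' T'"
  then obtain E where "E \<in> T'" "ends G' E = {a, b}" by (auto simp: adj_in_def)
  then show "(f a, f b) \<in> (adj_rel G T)\<^sup>="
    using assms(2)[of E] by (auto simp: adj_in_def)
qed

lemma connected_sub_image:
  assumes "connected_sub G' T'" "verts G \<subseteq> f ` verts G'"
    and "\<And>E. E \<in> T' \<Longrightarrow>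
      (\<exists>e\<in>T. f ` ends G' E = ends G e) \<or> (\<forall>a\<in>ends G' E. \<forall>b\<in>ends G' E. f a = f b)"
  shows "connected_sub G T"
  unfolding connected_sub_def
proof (intro ballI)
  fix x y assume "x \<in> verts G" "y \<in> verts G"
  then obtain x' y' where "x' \<in> verts G'" "y' \<in> verts G'" "x = f x'" "y = f y'"
    using assms(2) by blast
  then show "(x, y) \<in> (adj_rel G T)\<^sup>*"
    using assms(1) rtrancl_adj_rel_map[OF _ assms(3)] unfolding connected_sub_def by blast
qed

lemma series_comp_simps [simp]:
  "verts (series_comp G H u v) = Inl ` verts G \<union> glue_map u v ` verts H"
  "edges (series_comp G H u v) = Inl ` edges G \<union> Inr ` edges H"
  "ends (series_comp G H u v) (Inl e) = Inl ` ends G e"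
  "ends (series_comp G H u v) (Inr f) = glue_map u v ` ends H f"
  unfolding series_comp_def by simp_all

lemma inj_glue_map: "inj (glue_map u v)"
  unfolding glue_map_def inj_def by auto

lemma connected_sub_series_comp:
  assumes "connected_sub G TG" "connected_sub H TH" "u \<in> verts G" "v \<in> verts H"
  shows "connected_sub (series_comp G H u v) (Inl ` TG \<union> Inr ` TH)"
proof -
  let ?R = "adj_rel (series_comp G H u v) (Inl ` TG \<union> Inr ` TH)"
  have left: "(Inl x, Inl y) \<in> ?R\<^sup>*" if "x \<in> verts G" "y \<in> verts G" for x y
    using assms(1) that unfolding connected_sub_def
    by (intro rtrancl_adj_rel_map[where f = Inl]) (auto simp: bex_Un)
  have right: "(glue_map u v x, glue_map u v y) \<in> ?R\<^sup>*"
    if "x \<in> verts H" "y \<in> verts H" for x y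
    using assms(2) that unfolding connected_sub_def
    by (intro rtrancl_adj_rel_map[where f = "glue_map u v"]) (auto simp: bex_Un)
  have "glue_map u v v = Inl u" by (simp add: glue_map_def)
  then have "(X, Inl u) \<in> ?R\<^sup>* \<and> (Inl u, X) \<in> ?R\<^sup>*" if "X \<in> verts (series_comp G H u v)" for X
    using that left[OF _ assms(3)] left[OF assms(3)] right[OF _ assms(4)] right[OF assms(4)]
    by auto
  then show ?thesis unfolding connected_sub_def by (meson rtrancl_trans)
qed

lemma spanning_tree_series_comp:
  assumes "spanning_tree G TG" "spanning_tree H TH" "u \<in> verts G" "v \<in> verts H"
  shows "spanning_tree (series_comp G H u v) (Inl ` TG \<union> Inr ` TH)"
proof -
  let ?S = "series_comp G H u v" and ?T = "Inl ` TG \<union> Inr ` TH"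
  have [simp]: "case_sum id (\<lambda>_. u) (glue_map u v x) = u"
    "case_sum (\<lambda>_. v) id (glue_map u v x) = x" for x
    by (simp_all add: glue_map_def)
  have "\<not> connected_sub ?S (?T - {E})" if "E \<in> ?T" for E
  proof
    assume conn: "connected_sub ?S (?T - {E})"
    show False
    proof (cases E)
      case (Inl e)
      have "connected_sub G (TG - {e})"
        using conn
      proof (rule connected_sub_image[where f = "case_sum id (\<lambda>_. u)"])
        show "verts G \<subseteq> case_sum id (\<lambda>_. u) ` verts ?S" by force
      qed (auto simp: Inl image_image)
      with assms(1) that Inl show False unfolding spanning_tree_def by auto
    next
      case (Inr e)
      have "connected_sub H (TH - {e})"
        using conn
      proof (rule connected_sub_image[where f = "case_sum (\<lambda>_. v) id"])
        show "verts H \<subseteq> case_sum (\<lambda>_. v) id ` verts ?S"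
          by (simp add: image_Un image_image)
      qed (auto simp: Inr image_image)
      with assms(2) that Inr show False unfolding spanning_tree_def by auto
    qed
  qed
  moreover have "?T \<subseteq> edges ?S" "connected_sub ?S ?T"
    using assms connected_sub_series_comp unfolding spanning_tree_def by auto
  ultimately show ?thesis unfolding spanning_tree_def by blast
qed

lemma wf_graph_series_comp:
  assumes "wf_graph G" "wf_graph H"
  shows "wf_graph (series_comp G H u v)"
proof -
  let ?S = "series_comp G H u v"
  have "\<exists>x y. x \<in> verts ?S \<and> y \<in> verts ?S \<and> x \<noteq> y \<and> ends ?S E = {x, y}"
    if E: "E \<in> edges ?S" for E
  proof (cases E)
    case (Inl e)
    then obtain x y where "x \<in> verts G" "y \<in> verts G" "x \<noteq> y" "ends G e = {x, y}"
      using E assms(1) unfolding wf_graph_def by auto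
    then have "Inl x \<in> verts ?S \<and> Inl y \<in> verts ?S \<and> Inl x \<noteq> Inl y \<and>
        ends ?S E = {Inl x, Inl y}"
      using Inl by simp
    then show ?thesis by (intro exI)
  next
    case (Inr e)
    then obtain x y where "x \<in> verts H" "y \<in> verts H" "x \<noteq> y" "ends H e = {x, y}"
      using E assms(2) unfolding wf_graph_def by auto
    then have "glue_map u v x \<in> verts ?S \<and> glue_map u v y \<in> verts ?S \<and>
        glue_map u v x \<noteq> glue_map u v y \<and> ends ?S E = {glue_map u v x, glue_map u v y}"
      using Inr inj_glue_map[of u v] by (simp add: inj_eq)
    then show ?thesis by (intro exI)
  qed
  then show ?thesis using assms unfolding wf_graph_def by auto
qed

lemma connected_graph_series_comp:
  assumes "connected_graph G" "connected_graph H" "u \<in> verts G" "v \<in> verts H"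
  shows "connected_graph (series_comp G H u v)"
  using assms wf_graph_series_comp[of G H u v]
    connected_sub_series_comp[of G "edges G" H "edges H" u v]
  unfolding connected_graph_def by auto

lemma card_verts_series_comp:
  assumes "finite (verts G)" "finite (verts H)" "u \<in> verts G" "v \<in> verts H"
  shows "card (verts (series_comp G H u v)) = card (verts G) + card (verts H) - 1"
proof -
  have verts_eq: "verts (series_comp G H u v) = Inl ` verts G \<union> Inr ` (verts H - {v})"
    using assms(3,4) by (auto simp: glue_map_def)
  have "card (verts H - {v}) = card (verts H) - 1" "card (verts H) \<ge> 1"
    using assms by (auto simp: Suc_le_eq card_gt_0_iff)
  then show ?thesis
    unfolding verts_eq using assms by (subst card_Un_disjoint) (auto simp: card_image)
qed

lemma card_edges_series_comp:
  assumes "finite (edges G)" "finite (edges H)"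
  shows "card (edges (series_comp G H u v)) = card (edges G) + card (edges H)"
  using assms by (simp, subst card_Un_disjoint) (auto simp: card_image)

lemma connected_graph_edges_nonempty:
  assumes "connected_graph G" "2 \<le> card (verts G)"
  shows "edges G \<noteq> {}"
proof
  assume "edges G = {}"
  then have no_adj: "adj_rel G (edges G) = {}" by (simp add: adj_in_def)
  have "x = y" if "x \<in> verts G" "y \<in> verts G" for x y
  proof -
    have "(x, y) \<in> (adj_rel G (edges G))\<^sup>*"
      using assms(1) that unfolding connected_graph_def connected_sub_def by blast
    then show "x = y" unfolding no_adj by simp
  qed
  then have "card (verts G) \<le> 1"
    using assms(1) by (simp add: card_le_Suc0_iff_eq connected_graph_def wf_graph_def)
  with assms(2) show False by simp
qed

lemma density_eq_imp_cross_mult_eq: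
  assumes "2 \<le> card (verts G)" "2 \<le> card (verts H)" "density G = density H"
  shows "card (edges G) * (card (verts H) - 1) = card (edges H) * (card (verts G) - 1)"
proof -
  have "real (card (verts G)) - 1 = real (card (verts G) - 1)"
    "real (card (verts H)) - 1 = real (card (verts H) - 1)"
    using assms(1,2) by (simp_all add: of_nat_diff)
  then have "real (card (edges G) * (card (verts H) - 1)) =
      real (card (edges H) * (card (verts G) - 1))"
    using assms unfolding density_def by (simp add: field_simps)
  then show ?thesis by (simp only: of_nat_eq_iff)
qed

lemma cross_mult_eq_common_factor:
  fixes m1 r1 m2 r2 :: nat
  assumes "m1 * r2 = m2 * r1" "0 < m1" "0 < m2"
  obtains a b t1 t2 where "m1 = a * t1" "r1 = b * t1" "m2 = a * t2" "r2 = b * t2"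
    "0 < t1" "0 < t2"
proof -
  define t1 where "t1 = gcd m1 r1"
  define a where "a = m1 div t1"
  define b where "b = r1 div t1"
  have t1: "0 < t1" and m1: "m1 = a * t1" and r1: "r1 = b * t1"
    using assms(2) by (simp_all add: t1_def a_def b_def)
  have "coprime a b" unfolding a_def b_def t1_def using assms(2) by (intro div_gcd_coprime) simp
  have "(a * r2) * t1 = (m2 * b) * t1" using assms(1) m1 r1 by (simp add: ac_simps)
  then have cross: "a * r2 = m2 * b" using t1 by simp
  then have "a dvd m2" using \<open>coprime a b\<close> by (metis coprime_dvd_mult_left_iff dvd_triv_left)
  then obtain t2 where m2: "m2 = a * t2" by blast
  have "0 < a" using m1 assms(2) by (simp add: gr0I)
  then have "r2 = b * t2" using cross m2 by (simp add: ac_simps)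
  moreover have "0 < t2" using m2 assms(3) by simp
  ultimately show thesis using that m1 r1 m2 t1 by blast
qed

lemma is_CBO_series_comp:
  assumes f: "is_CBO G f" and g: "is_CBO H g" and wf: "wf_graph G" "wf_graph H"
    and uv: "u \<in> verts G" "v \<in> verts H"
    and mG: "card (edges G) = a * s" and rG: "card (verts G) - 1 = b * s"
    and mH: "card (edges H) = a * t" and rH: "card (verts H) - 1 = b * t"
    and pos: "0 < s" "0 < t"
  shows "is_CBO (series_comp G H u v) (interleave s t f g)"
proof -
  let ?S = "series_comp G H u v"
  have fin: "finite (verts G)" "finite (verts H)" "finite (edges G)" "finite (edges H)"
    using wf by (simp_all add: wf_graph_def)
  have "card (verts G) \<ge> 1" "card (verts H) \<ge> 1"
    using fin uv by (auto simp: Suc_le_eq card_gt_0_iff)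
  then have mS: "card (edges ?S) = a * (s + t)" and rS: "card (verts ?S) - 1 = b * (s + t)"
    using card_edges_series_comp[OF fin(3,4)] card_verts_series_comp[OF fin(1,2) uv]
      mG rG mH rH by (simp_all add: algebra_simps)
  have bij_f: "bij_betw f (edges G) {1..a * s}" and bij_g: "bij_betw g (edges H) {1..a * t}"
    using f g mG mH by (simp_all add: is_CBO_def)
  have windows: "spanning_tree ?S (cbo_window ?S (interleave s t f g) i)"
    if i: "i \<in> {1..a * (s + t)}" for i
  proof -
    define iG where "iG = slots_before (s + t) 0 s (i - 1) mod (a * s) + 1"
    define iH where "iH = slots_before (s + t) s t (i - 1) mod (a * t) + 1"
    have "0 < a" using i by (cases "a = 0") auto
    then have "iG \<in> {1..card (edges G)}" "iH \<in> {1..card (edges H)}"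
      using pos by (simp_all add: iG_def iH_def mG mH Suc_le_eq)
    then have "spanning_tree G (cbo_window G f iG)" "spanning_tree H (cbo_window H g iH)"
      using f g by (simp_all add: is_CBO_def)
    moreover have "cbo_window ?S (interleave s t f g) i =
        Inl ` cbo_window G f iG \<union> Inr ` cbo_window H g iH"
      unfolding cbo_window_in_cyclic_window mS rS mG rG mH rH iG_def iH_def
      using interleave_window[OF bij_betw_imp_surj_on[OF bij_f, THEN equalityD1]
          bij_betw_imp_surj_on[OF bij_g, THEN equalityD1] pos]
      by simp
    ultimately show ?thesis by (simp add: spanning_tree_series_comp uv)
  qed
  show ?thesis
    unfolding is_CBO_def mS using bij_betw_interleave[OF bij_f bij_g pos] windows
    by simp
qed

theorem mainTheorem6:
  fixes G :: "('a, 'e) mgraph" and H :: "('b, 'f) mgraph" and u :: 'a and v :: 'b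
  assumes "cyclically_orderable G" and "cyclically_orderable H"
    and "card (verts G) \<ge> 2" and "card (verts H) \<ge> 2"
    and "density G = density H"
    and "u \<in> verts G" and "v \<in> verts H"
  shows "cyclically_orderable (series_comp G H u v)"
proof -
  obtain f g where f: "is_CBO G f" and g: "is_CBO H g"
    and conn: "connected_graph G" "connected_graph H"
    using assms(1,2) unfolding cyclically_orderable_def by blast
  have wf: "wf_graph G" "wf_graph H" using conn by (simp_all add: connected_graph_def)
  have "0 < card (edges G)" "0 < card (edges H)"
    using connected_graph_edges_nonempty[OF conn(1) assms(3)]
      connected_graph_edges_nonempty[OF conn(2) assms(4)] wf
    by (simp_all add: card_gt_0_iff wf_graph_def)
  then obtain a b s t where dims:
    "card (edges G) = a * s" "card (verts G) - 1 = b * s"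
    "card (edges H) = a * t" "card (verts H) - 1 = b * t" "0 < s" "0 < t"
    by (rule cross_mult_eq_common_factor[OF density_eq_imp_cross_mult_eq[OF assms(3-5)]])
  have "is_CBO (series_comp G H u v) (interleave s t f g)"
    by (rule is_CBO_series_comp[OF f g wf assms(6,7) dims])
  then show ?thesis
    using connected_graph_series_comp[OF conn assms(6,7)]
    unfolding cyclically_orderable_def by blast
qed

end
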